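(* Let $a,\alpha\in\mathcal{F}\setminus\{0\}$, $n$ a positive integer, and $f_n(x)=\alpha x^n$. (a) If $\operatorname{char}\mathcal{F}=0$, then for all $x,y\in D(a,|a|_\mathfrak{p}/q^{e+1})$, $|f_n(x)-f_n(y)|_\mathfrak{p}=|\alpha|_\mathfrak{p}|n|_\mathfrak{p}|a|_\mathfrak{p}^{n-1}|x-y|_\mathfrak{p}$, where $e$ is the ramification index of $\mathcal{F}/\mathbb{Q}_p$. (b) If $\operatorname{char}\mathcal{F}=p>0$, then for all $x,y\in D(a,|a|_\mathfrak{p}/q)$, $|f_n(x)-f_n(y)|_\mathfrak{p}=|\alpha|_\mathfrak{p}|a|_\mathfrak{p}^{\,n-p^{v_p(n)}}|x-y|_\mathfrak{p}^{\,p^{v_p(n)}}$. In particular, if $p\nmid n$, $f_n$ is scaling on $D(a,|a|_\mathfrak{p}/q)$ with scaling ratio $|\alpha|_\mathfrak{p}|a|_\mathfrak{p}^{n-1}$.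
   Context: $\mathcal{F}$ is a non-Archimedean local field, $q$ the cardinality of its residue field, $|\cdot|_\mathfrak{p}$ the normalized absolute value; $D(a,r)=\{x:|x-a|_\mathfrak{p}\le r\}$. When $\operatorname{char}\mathcal{F}=0$, $\mathcal{F}$ is a finite extension of $\mathbb{Q}_p$ with ramification index $e$, and for integers $k$, $v_\mathfrak{p}(k)=e\,v_p(k)$ where $v_p$ is the usual $p$-adic valuation on $\mathbb{Z}$; $|n|_\mathfrak{p}$ denotes the absolute value of the integer $n$ viewed in $\mathcal{F}$. $v_p(n)$ is the exponent of $p$ in $n$. A map is scaling with ratio $q^\lambda$ if $|f(x)-f(y)|_\mathfrak{p}=q^\lambda|x-y|_\mathfrak{p}$ for all $x,y$ in its domain. *)

theory Defs
  imports "HOL-Analysis.Analysis" "HOL-Computational_Algebra.Computational_Algebra"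
begin

definition val_ring :: "('a::field \<Rightarrow> real) \<Rightarrow> 'a set" where
  "val_ring absp = {x. absp x \<le> 1}"

text \<open>Residue field O/m, as the set of cosets of the maximal ideal m = {|x| < 1} in O.\<close>
definition residue_field :: "('a::field \<Rightarrow> real) \<Rightarrow> 'a set set" where
  "residue_field absp = (\<lambda>x. {y \<in> val_ring absp. absp (y - x) < 1}) ` val_ring absp"

definition nonarch_abs :: "('a::field \<Rightarrow> real) \<Rightarrow> bool" where
  "nonarch_abs absp \<longleftrightarrow>
     (\<forall>x. 0 \<le> absp x) \<and> (\<forall>x. absp x = 0 \<longleftrightarrow> x = 0) \<and>
     (\<forall>x y. absp (x * y) = absp x * absp y) \<and>
     (\<forall>x y. absp (x + y) \<le> max (absp x) (absp y))"

definition abs_complete :: "('a::field \<Rightarrow> real) \<Rightarrow> bool" where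
  "abs_complete absp \<longleftrightarrow>
     (\<forall>X::nat \<Rightarrow> 'a. (\<forall>\<epsilon>>0. \<exists>N. \<forall>m\<ge>N. \<forall>n\<ge>N. absp (X m - X n) < \<epsilon>) \<longrightarrow>
        (\<exists>L. \<forall>\<epsilon>>0. \<exists>N. \<forall>n\<ge>N. absp (X n - L) < \<epsilon>))"

definition nonarch_local_field :: "('a::field \<Rightarrow> real) \<Rightarrow> nat \<Rightarrow> bool" where
  "nonarch_local_field absp q \<longleftrightarrow>
     nonarch_abs absp \<and> abs_complete absp \<and>
     finite (residue_field absp) \<and> card (residue_field absp) = q \<and>
     absp ` (UNIV - {0}) = range (\<lambda>k::int. real q powi k)"

definition disk :: "('a::field \<Rightarrow> real) \<Rightarrow> 'a \<Rightarrow> real \<Rightarrow> 'a set" where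
  "disk absp a r = {x. absp (x - a) \<le> r}"

end

theory Submission
  imports Defs
begin

(* Write x = a (1 + s), y = a (1 + t) with |s|, |t| <= r.  By the binomial theorem
   (1 + s)^n - (1 + t)^n = n (s - t) + sum_{k >= 2} (n choose k) (s^k - t^k), and
   |s^k - t^k| <= r^(k-1) |s - t|.  As long as every |n choose k| r^(k-1) is strictly smaller
   than |n|, the linear term dominates, so by the ultrametric inequality it alone determines
   the absolute value of the difference.
   In characteristic 0 this holds for every radius r < |p|: from k (n choose k) = n (n-1 choose k-1)
   and |k| >= |p|^(k-1) one gets |n choose k| |p|^(k-1) <= |n|.
   In characteristic p, write n = p^v m with p not dividing m.  The Frobenius power x |-> x^(p^v)
   is additive and maps the disk of radius |a| r about a into the disk of radius |a^(p^v)| r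
   about a^(p^v); there |m| = 1, so the condition only asks for r < 1. *)

lemma one_plus_power_diff_eq:
  fixes s t :: "'a::comm_ring_1"
  assumes "0 < n"
  shows "(1 + s) ^ n - (1 + t) ^ n
    = of_nat n * (s - t) + (\<Sum>k=2..n. of_nat (n choose k) * (s ^ k - t ^ k))"
proof -
  have binomial: "(1 + u) ^ n = (\<Sum>k\<le>n. of_nat (n choose k) * u ^ k)" for u :: 'a
    by (subst add.commute) (simp add: binomial_ring)
  have "{..n} = {0, 1} \<union> {2..n}"
    using \<open>0 < n\<close> by auto
  then have "(1 + s) ^ n - (1 + t) ^ n
      = (\<Sum>k\<in>{0, 1} \<union> {2..n}. of_nat (n choose k) * (s ^ k - t ^ k))"
    by (simp add: binomial right_diff_distrib flip: sum_subtractf)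
  also have "\<dots> = of_nat n * (s - t) + (\<Sum>k=2..n. of_nat (n choose k) * (s ^ k - t ^ k))"
    by (subst sum.union_disjoint) auto
  finally show ?thesis .
qed

lemma freshmans_dream_diff:
  fixes x y :: "'a::comm_ring_1"
  assumes "prime CHAR('a)" and "m = CHAR('a) ^ k"
  shows "(x - y) ^ m = x ^ m - y ^ m"
  using freshmans_dream'[OF assms, of "x - y" y] by (simp add: eq_diff_eq)

context
  fixes absp :: "'a::field \<Rightarrow> real"
  assumes nonarch: "nonarch_abs absp"
begin

lemma nonarch_abs_nonneg: "0 \<le> absp x"
  using nonarch unfolding nonarch_abs_def by blast

lemma nonarch_abs_eq_0_iff: "absp x = 0 \<longleftrightarrow> x = 0"
  using nonarch unfolding nonarch_abs_def by blast

lemma nonarch_abs_mult: "absp (x * y) = absp x * absp y"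
  using nonarch unfolding nonarch_abs_def by blast

lemma nonarch_abs_add_le_max: "absp (x + y) \<le> max (absp x) (absp y)"
  using nonarch unfolding nonarch_abs_def by blast

lemma nonarch_abs_pos: "x \<noteq> 0 \<Longrightarrow> 0 < absp x"
  using nonarch_abs_nonneg[of x] nonarch_abs_eq_0_iff[of x] by linarith

lemma nonarch_abs_zero [simp]: "absp 0 = 0"
  by (simp add: nonarch_abs_eq_0_iff)

lemma nonarch_abs_one [simp]: "absp 1 = 1"
  using nonarch_abs_mult[of 1 1] nonarch_abs_pos[of 1] by simp

lemma nonarch_abs_minus [simp]: "absp (- x) = absp x"
proof -
  have "absp (-1) * absp (-1) = 1"
    by (simp flip: nonarch_abs_mult)
  then have "absp (-1) = 1"
    using nonarch_abs_nonneg[of "-1"] by (metis abs_of_nonneg abs_square_eq_1 power2_eq_square)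
  then show ?thesis
    using nonarch_abs_mult[of "-1" x] by simp
qed

lemma nonarch_abs_diff_le_max: "absp (x - y) \<le> max (absp x) (absp y)"
  using nonarch_abs_add_le_max[of x "- y"] by simp

lemma nonarch_abs_power: "absp (x ^ n) = absp x ^ n"
  by (induction n) (simp_all add: nonarch_abs_mult)

lemma nonarch_abs_divide: "absp (x / y) = absp x / absp y"
proof (cases "y = 0")
  case False
  then have "absp (x / y) * absp y = absp x"
    by (simp flip: nonarch_abs_mult)
  with nonarch_abs_pos[OF False] show ?thesis
    by (simp add: field_simps)
qed simp

lemma nonarch_abs_of_nat_le_1: "absp (of_nat k) \<le> 1"
proof (induction k)
  case (Suc k)
  then show ?case
    using nonarch_abs_add_le_max[of 1 "of_nat k"] by simp
qed simp

lemma nonarch_abs_of_int_le_1: "absp (of_int k) \<le> 1"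
proof (cases "0 \<le> k")
  case True
  then have "of_int k = (of_nat (nat k) :: 'a)"
    by simp
  then show ?thesis
    using nonarch_abs_of_nat_le_1 by simp
next
  case False
  then have "of_int k = - (of_nat (nat (- k)) :: 'a)"
    by simp
  then show ?thesis
    using nonarch_abs_of_nat_le_1 by simp
qed

lemma nonarch_abs_sum_le:
  assumes "0 \<le> c" "\<And>i. i \<in> A \<Longrightarrow> absp (f i) \<le> c"
  shows "absp (sum f A) \<le> c"
  using assms(2)
proof (induction A rule: infinite_finite_induct)
  case (insert x F)
  then have "absp (f x) \<le> c" "absp (sum f F) \<le> c"
    by simp_all
  then show ?case
    using insert.hyps nonarch_abs_add_le_max[of "f x" "sum f F"] by simp
qed (use assms(1) in simp_all)

lemma nonarch_abs_sum_less:
  assumes "0 < c" "\<And>i. i \<in> A \<Longrightarrow> absp (f i) < c"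
  shows "absp (sum f A) < c"
  using assms(2)
proof (induction A rule: infinite_finite_induct)
  case (insert x F)
  then have "absp (f x) < c" "absp (sum f F) < c"
    by simp_all
  then show ?case
    using insert.hyps nonarch_abs_add_le_max[of "f x" "sum f F"] by simp
qed (use assms(1) in simp_all)

lemma nonarch_abs_add_eq_left:
  assumes "absp y < absp x"
  shows "absp (x + y) = absp x"
proof -
  have "absp x \<le> max (absp (x + y)) (absp y)"
    using nonarch_abs_diff_le_max[of "x + y" y] by simp
  then show ?thesis
    using nonarch_abs_add_le_max[of x y] assms by linarith
qed

lemma nonarch_abs_of_int_mult_le: "absp (of_int u * x) \<le> absp x"
  using nonarch_abs_of_int_le_1[of u] nonarch_abs_nonneg
  by (simp add: nonarch_abs_mult mult_left_le_one_le)

lemma nonarch_abs_of_nat_eq_1: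
  assumes p: "prime p" and p_small: "absp (of_nat p) < 1" and "\<not> p dvd j"
  shows "absp (of_nat j) = 1"
proof (rule ccontr)
  assume "absp (of_nat j) \<noteq> 1"
  then have j_small: "absp (of_nat j) < 1"
    using nonarch_abs_of_nat_le_1[of j] by linarith
  have "coprime j p"
    using prime_imp_coprime[OF p \<open>\<not> p dvd j\<close>] by (simp add: coprime_commute)
  then have "gcd (int j) (int p) = 1"
    by simp
  then obtain u v where "u * int j + v * int p = 1"
    using bezout_int[of "int j" "int p"] by auto
  then have "of_int u * of_nat j + of_int v * of_nat p = (1 :: 'a)"
    by (metis of_int_1 of_int_add of_int_mult of_int_of_nat_eq)
  moreover have "absp (of_int u * of_nat j + of_int v * of_nat p) < 1"
    using nonarch_abs_add_le_max[of "of_int u * of_nat j" "of_int v * of_nat p"]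
      nonarch_abs_of_int_mult_le[of u "of_nat j"] nonarch_abs_of_int_mult_le[of v "of_nat p"]
      j_small p_small by linarith
  ultimately show False
    by simp
qed

lemma nonarch_abs_of_nat_eq_power_multiplicity:
  assumes p: "prime p" and p_small: "absp (of_nat p) < 1" and "0 < j"
  shows "absp (of_nat j) = absp (of_nat p) ^ multiplicity p j"
proof -
  define v where "v = multiplicity p j"
  obtain m where j: "j = p ^ v * m" and "\<not> p dvd m"
    using multiplicity_decompose'[of j p] \<open>0 < j\<close> p unfolding v_def
    by (metis neq0_conv not_prime_unit)
  have "absp (of_nat m) = 1"
    using nonarch_abs_of_nat_eq_1[OF p p_small \<open>\<not> p dvd m\<close>] .
  then have "absp (of_nat j) = absp (of_nat p) ^ v"
    by (simp add: j nonarch_abs_mult nonarch_abs_power)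
  then show ?thesis
    by (simp add: v_def)
qed

lemma nonarch_abs_of_nat_ge_power:
  assumes p: "prime p" and p_small: "absp (of_nat p) < 1" and "0 < j"
  shows "absp (of_nat p) ^ (j - 1) \<le> absp (of_nat j)"
proof -
  define v where "v = multiplicity p j"
  have "v < 2 ^ v"
    by simp
  also have "(2::nat) ^ v \<le> p ^ v"
    using prime_ge_2_nat[OF p] by (rule power_mono) simp
  also have "p ^ v \<le> j"
    using \<open>0 < j\<close> multiplicity_dvd[of p j] by (simp add: v_def dvd_imp_le)
  finally have "v \<le> j - 1"
    by simp
  then have "absp (of_nat p) ^ (j - 1) \<le> absp (of_nat p) ^ v"
    using p_small nonarch_abs_nonneg by (intro power_decreasing) auto
  then show ?thesis
    using nonarch_abs_of_nat_eq_power_multiplicity[OF p p_small \<open>0 < j\<close>] by (simp add: v_def)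
qed

lemma nonarch_abs_binomial_le:
  assumes p: "prime p" and p_small: "absp (of_nat p) < 1" and "0 < j"
  shows "absp (of_nat p) ^ (j - 1) * absp (of_nat (n choose j)) \<le> absp (of_nat n)"
proof -
  have "absp (of_nat p) ^ (j - 1) * absp (of_nat (n choose j))
      \<le> absp (of_nat j) * absp (of_nat (n choose j))"
    using nonarch_abs_of_nat_ge_power[OF assms] nonarch_abs_nonneg by (rule mult_right_mono)
  also have "\<dots> = absp (of_nat n) * absp (of_nat (n - 1 choose (j - 1)))"
    using times_binomial_minus1_eq[OF \<open>0 < j\<close>, of n]
    by (simp flip: nonarch_abs_mult of_nat_mult)
  also have "\<dots> \<le> absp (of_nat n)"
    using nonarch_abs_of_nat_le_1 nonarch_abs_nonneg by (simp add: mult_left_le)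
  finally show ?thesis .
qed

lemma nonarch_abs_power_diff_le:
  assumes "absp s \<le> r" and "absp t \<le> r"
  shows "absp (s ^ k - t ^ k) \<le> r ^ (k - 1) * absp (s - t)"
proof -
  have "0 \<le> r"
    using assms(1) nonarch_abs_nonneg[of s] by linarith
  have "absp (\<Sum>i<k. t ^ (k - Suc i) * s ^ i) \<le> r ^ (k - 1)"
  proof (rule nonarch_abs_sum_le)
    show "0 \<le> r ^ (k - 1)"
      using \<open>0 \<le> r\<close> by simp
  next
    fix i assume "i \<in> {..<k}"
    have "absp (t ^ (k - Suc i) * s ^ i) = absp t ^ (k - Suc i) * absp s ^ i"
      by (simp add: nonarch_abs_mult nonarch_abs_power)
    also have "\<dots> \<le> r ^ (k - Suc i) * r ^ i"
      using assms nonarch_abs_nonneg \<open>0 \<le> r\<close> by (intro mult_mono power_mono) auto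
    also have "\<dots> = r ^ (k - 1)"
      using \<open>i \<in> {..<k}\<close> by (simp flip: power_add)
    finally show "absp (t ^ (k - Suc i) * s ^ i) \<le> r ^ (k - 1)" .
  qed
  then show ?thesis
    using nonarch_abs_nonneg[of "s - t"]
    by (simp add: power_diff_sumr2 nonarch_abs_mult mult.commute mult_left_mono)
qed

lemma nonarch_abs_one_plus_power_diff:
  assumes s: "absp s \<le> r" and t: "absp t \<le> r" and "0 < n"
    and binomial_small:
      "\<And>j. 2 \<le> j \<Longrightarrow> j \<le> n \<Longrightarrow> absp (of_nat (n choose j)) * r ^ (j - 1) < absp (of_nat n)"
  shows "absp ((1 + s) ^ n - (1 + t) ^ n) = absp (of_nat n) * absp (s - t)"
proof (cases "s = t")
  case False
  have "0 < absp (of_nat n)"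
  proof (cases "n = 1")
    case False
    have "0 \<le> r"
      using s nonarch_abs_nonneg[of s] by linarith
    then have "0 \<le> absp (of_nat (n choose 2)) * r ^ (2 - 1)"
      using nonarch_abs_nonneg by simp
    moreover have "absp (of_nat (n choose 2)) * r ^ (2 - 1) < absp (of_nat n)"
      using False \<open>0 < n\<close> by (intro binomial_small) auto
    ultimately show ?thesis
      by linarith
  qed simp
  then have lead_pos: "0 < absp (of_nat n * (s - t))"
    using False by (simp add: nonarch_abs_mult nonarch_abs_pos)
  have "absp (\<Sum>k=2..n. of_nat (n choose k) * (s ^ k - t ^ k)) < absp (of_nat n * (s - t))"
  proof (rule nonarch_abs_sum_less[OF lead_pos])
    fix k assume "k \<in> {2..n}"
    have "absp (of_nat (n choose k) * (s ^ k - t ^ k))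
        \<le> absp (of_nat (n choose k)) * r ^ (k - 1) * absp (s - t)"
      using nonarch_abs_power_diff_le[OF s t, of k] nonarch_abs_nonneg
      by (simp add: nonarch_abs_mult mult_left_mono mult.assoc)
    also have "\<dots> < absp (of_nat n * (s - t))"
      using binomial_small[of k] \<open>k \<in> {2..n}\<close> False
      by (simp add: nonarch_abs_mult nonarch_abs_pos)
    finally show "absp (of_nat (n choose k) * (s ^ k - t ^ k)) < absp (of_nat n * (s - t))" .
  qed
  then show ?thesis
    by (simp add: one_plus_power_diff_eq[OF \<open>0 < n\<close>] nonarch_abs_add_eq_left nonarch_abs_mult)
qed simp

lemma nonarch_abs_power_diff_on_disk:
  assumes "a \<noteq> 0" and "0 < n"
    and x: "x \<in> disk absp a (absp a * r)" and y: "y \<in> disk absp a (absp a * r)"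
    and binomial_small:
      "\<And>j. 2 \<le> j \<Longrightarrow> j \<le> n \<Longrightarrow> absp (of_nat (n choose j)) * r ^ (j - 1) < absp (of_nat n)"
  shows "absp (x ^ n - y ^ n) = absp (of_nat n) * absp a ^ (n - 1) * absp (x - y)"
proof -
  define s where "s = (x - a) / a"
  define t where "t = (y - a) / a"
  have a_pos: "0 < absp a"
    using nonarch_abs_pos[OF \<open>a \<noteq> 0\<close>] .
  have "absp s \<le> r" "absp t \<le> r"
    using x y a_pos by (simp_all add: s_def t_def disk_def nonarch_abs_divide divide_le_eq mult.commute)
  then have "absp ((1 + s) ^ n - (1 + t) ^ n) = absp (of_nat n) * absp (s - t)"
    using \<open>0 < n\<close> binomial_small by (rule nonarch_abs_one_plus_power_diff)
  moreover have "x ^ n - y ^ n = a ^ n * ((1 + s) ^ n - (1 + t) ^ n)" "x - y = a * (s - t)"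
    using \<open>a \<noteq> 0\<close> by (simp_all add: s_def t_def field_simps flip: power_mult_distrib)
  moreover have "absp a ^ n = absp a ^ (n - 1) * absp a"
    using \<open>0 < n\<close> by (simp flip: power_Suc2)
  ultimately show ?thesis
    by (simp add: nonarch_abs_mult nonarch_abs_power)
qed

lemma nonarch_abs_power_diff_on_disk_char_0:
  assumes "CHAR('a) = 0" and p: "prime p" and p_small: "absp (of_nat p) < 1"
    and "0 \<le> r" and "r < absp (of_nat p)" and "a \<noteq> 0" and "0 < n"
    and x: "x \<in> disk absp a (absp a * r)" and y: "y \<in> disk absp a (absp a * r)"
  shows "absp (x ^ n - y ^ n) = absp (of_nat n) * absp a ^ (n - 1) * absp (x - y)"
  using \<open>a \<noteq> 0\<close> \<open>0 < n\<close> x y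
proof (rule nonarch_abs_power_diff_on_disk)
  fix j assume "2 \<le> j" "j \<le> n"
  define P where "P = absp (of_nat p :: 'a)"
  have "0 < P" "0 < absp (of_nat n :: 'a)"
    using \<open>CHAR('a) = 0\<close> \<open>0 < n\<close> prime_gt_0_nat[OF p]
    by (simp_all add: P_def nonarch_abs_pos of_nat_eq_0_iff_char_dvd)
  have ratio: "(r / P) ^ (j - 1) < 1"
    using \<open>0 \<le> r\<close> \<open>r < absp (of_nat p)\<close> \<open>0 < P\<close> \<open>2 \<le> j\<close>
    by (intro power_less_one_iff[THEN iffD2]) (auto simp: P_def)
  have "absp (of_nat (n choose j)) * r ^ (j - 1)
      = (P ^ (j - 1) * absp (of_nat (n choose j))) * (r / P) ^ (j - 1)"
    using \<open>0 < P\<close> by (simp add: power_divide)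
  also have "\<dots> \<le> absp (of_nat n) * (r / P) ^ (j - 1)"
    using nonarch_abs_binomial_le[OF p p_small, of j n] \<open>2 \<le> j\<close> \<open>0 \<le> r\<close> \<open>0 < P\<close>
    by (intro mult_right_mono) (simp_all add: P_def)
  also have "\<dots> < absp (of_nat n)"
    using ratio \<open>0 < absp (of_nat n :: 'a)\<close> by simp
  finally show "absp (of_nat (n choose j)) * r ^ (j - 1) < absp (of_nat n)" .
qed

lemma nonarch_abs_power_diff_on_disk_char_p:
  assumes "CHAR('a) = p" and "0 < p" and "0 \<le> r" and "r < 1" and "a \<noteq> 0" and "0 < n"
    and x: "x \<in> disk absp a (absp a * r)" and y: "y \<in> disk absp a (absp a * r)"
  shows "absp (x ^ n - y ^ n)
    = absp a ^ (n - p ^ multiplicity p n) * absp (x - y) ^ (p ^ multiplicity p n)"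
proof -
  have p: "prime p"
    using assms(1,2) prime_CHAR_semidom by blast
  define P where "P = p ^ multiplicity p n"
  obtain m where n: "n = P * m" and "\<not> p dvd m"
    using multiplicity_decompose'[of n p] \<open>0 < n\<close> p unfolding P_def
    by (metis neq0_conv not_prime_unit)
  have "0 < m" "0 < P"
    using n \<open>0 < n\<close> by simp_all
  have "absp (of_nat p :: 'a) = 0"
    using assms(1) of_nat_CHAR nonarch_abs_zero by metis
  then have m_unit: "absp (of_nat m :: 'a) = 1"
    using nonarch_abs_of_nat_eq_1[OF p _ \<open>\<not> p dvd m\<close>] by simp
  have frobenius: "(u - w) ^ P = u ^ P - w ^ P" for u w :: 'a
    using freshmans_dream_diff p assms(1) unfolding P_def by blast
  have near: "z ^ P \<in> disk absp (a ^ P) (absp (a ^ P) * r)" if "z \<in> disk absp a (absp a * r)" for z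
  proof -
    have "absp (z ^ P - a ^ P) = absp (z - a) ^ P"
      by (simp add: nonarch_abs_power flip: frobenius)
    also have "\<dots> \<le> (absp a * r) ^ P"
      using that nonarch_abs_nonneg by (intro power_mono) (auto simp: disk_def)
    also have "\<dots> \<le> absp (a ^ P) * r"
      using \<open>0 < P\<close> \<open>0 \<le> r\<close> \<open>r < 1\<close> nonarch_abs_nonneg[of a]
      by (simp add: nonarch_abs_power power_mult_distrib mult_left_mono power_le_one_iff
          power_decreasing[of 1 P r, simplified])
    finally show ?thesis
      by (simp add: disk_def)
  qed
  have "a ^ P \<noteq> 0"
    using \<open>a \<noteq> 0\<close> by simp
  then have "absp ((x ^ P) ^ m - (y ^ P) ^ m)
      = absp (of_nat m) * absp (a ^ P) ^ (m - 1) * absp (x ^ P - y ^ P)"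
    using \<open>0 < m\<close> near[OF x] near[OF y]
  proof (rule nonarch_abs_power_diff_on_disk)
    fix j assume "2 \<le> j" "j \<le> m"
    then have "r ^ (j - 1) < 1"
      using \<open>0 \<le> r\<close> \<open>r < 1\<close> by (simp add: power_less_one_iff)
    moreover have "absp (of_nat (m choose j)) * r ^ (j - 1) \<le> r ^ (j - 1)"
      using nonarch_abs_of_nat_le_1 nonarch_abs_nonneg \<open>0 \<le> r\<close>
      by (intro mult_left_le_one_le) simp_all
    ultimately show "absp (of_nat (m choose j)) * r ^ (j - 1) < absp (of_nat m)"
      using m_unit by linarith
  qed
  moreover have "absp (a ^ P) ^ (m - 1) = absp a ^ (n - P)"
    using n by (simp add: nonarch_abs_power diff_mult_distrib2 flip: power_mult)
  moreover have "x ^ n - y ^ n = (x ^ P) ^ m - (y ^ P) ^ m"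
    by (simp add: n power_mult)
  moreover have "absp (x ^ P - y ^ P) = absp (x - y) ^ P"
    by (simp add: nonarch_abs_power flip: frobenius)
  ultimately show ?thesis
    unfolding P_def[symmetric] by (simp add: m_unit)
qed

lemma card_residue_field_ge_2:
  assumes "finite (residue_field absp)"
  shows "2 \<le> card (residue_field absp)"
proof -
  define residue_class where "residue_class x = {y \<in> val_ring absp. absp (y - x) < 1}" for x
  have "residue_field absp = residue_class ` val_ring absp"
    by (simp add: residue_field_def residue_class_def)
  then have "residue_class 0 \<in> residue_field absp" "residue_class 1 \<in> residue_field absp"
    by (simp_all add: val_ring_def)
  moreover have "0 \<in> residue_class 0" "0 \<notin> residue_class 1"
    by (simp_all add: residue_class_def val_ring_def)
  ultimately have "card {residue_class 0, residue_class 1} \<le> card (residue_field absp)"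
    by (intro card_mono assms) auto
  moreover have "card {residue_class 0, residue_class 1} = 2"
    using \<open>0 \<in> residue_class 0\<close> \<open>0 \<notin> residue_class 1\<close> by (auto simp: card_2_iff)
  ultimately show ?thesis
    by simp
qed

end

theorem lemma4p1:
  fixes absp :: "'a::field \<Rightarrow> real" and q :: nat and a \<alpha> :: 'a and n :: nat
  assumes F: "nonarch_local_field absp q"
    and a: "a \<noteq> 0" and alpha: "\<alpha> \<noteq> 0" and n: "0 < n"
  shows
    "(\<forall>p e. CHAR('a) = 0 \<and> prime p \<and> 0 < e \<and> absp (of_nat p) = 1 / real q ^ e \<longrightarrow>
        (\<forall>x \<in> disk absp a (absp a / real q ^ (e + 1)). \<forall>y \<in> disk absp a (absp a / real q ^ (e + 1)).
           absp (\<alpha> * x ^ n - \<alpha> * y ^ n)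
             = absp \<alpha> * absp (of_nat n) * absp a ^ (n - 1) * absp (x - y)))
     \<and>
     (\<forall>p. CHAR('a) = p \<and> 0 < p \<longrightarrow>
        (\<forall>x \<in> disk absp a (absp a / real q). \<forall>y \<in> disk absp a (absp a / real q).
           absp (\<alpha> * x ^ n - \<alpha> * y ^ n)
             = absp \<alpha> * absp a ^ (n - p ^ multiplicity p n) * absp (x - y) ^ (p ^ multiplicity p n))
        \<and> (\<not> p dvd n \<longrightarrow>
             (\<forall>x \<in> disk absp a (absp a / real q). \<forall>y \<in> disk absp a (absp a / real q).
                absp (\<alpha> * x ^ n - \<alpha> * y ^ n) = (absp \<alpha> * absp a ^ (n - 1)) * absp (x - y))))"
proof -
  have N: "nonarch_abs absp" and "finite (residue_field absp)" and "card (residue_field absp) = q"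
    using F by (simp_all add: nonarch_local_field_def)
  then have "1 < real q"
    using card_residue_field_ge_2 by fastforce
  have scale: "absp (\<alpha> * x ^ n - \<alpha> * y ^ n) = absp \<alpha> * absp (x ^ n - y ^ n)" for x y
    by (simp add: nonarch_abs_mult[OF N] flip: right_diff_distrib)
  have char_p: "absp (\<alpha> * x ^ n - \<alpha> * y ^ n)
      = absp \<alpha> * absp a ^ (n - p ^ multiplicity p n) * absp (x - y) ^ (p ^ multiplicity p n)"
    if "CHAR('a) = p \<and> 0 < p" and "x \<in> disk absp a (absp a / real q)" "y \<in> disk absp a (absp a / real q)"
    for p x y
    using nonarch_abs_power_diff_on_disk_char_p[OF N, of p "1 / real q" a n x y] that a n \<open>1 < real q\<close>
    by (simp add: scale mult.assoc)
  show ?thesis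
  proof (intro conjI allI impI ballI)
    fix p e x y
    assume H: "CHAR('a) = 0 \<and> prime p \<and> 0 < e \<and> absp (of_nat p) = 1 / real q ^ e"
      and "x \<in> disk absp a (absp a / real q ^ (e + 1))" "y \<in> disk absp a (absp a / real q ^ (e + 1))"
    moreover have "absp (of_nat p :: 'a) < 1" "1 / real q ^ (e + 1) < absp (of_nat p :: 'a)"
      using H \<open>1 < real q\<close> by (simp_all add: divide_less_eq one_less_power)
    ultimately show "absp (\<alpha> * x ^ n - \<alpha> * y ^ n)
        = absp \<alpha> * absp (of_nat n) * absp a ^ (n - 1) * absp (x - y)"
      using nonarch_abs_power_diff_on_disk_char_0[OF N, of p "1 / real q ^ (e + 1)" a n x y] a n
      by (simp add: scale mult.assoc)
  next
    fix p x y
    assume "CHAR('a) = p \<and> 0 < p" "\<not> p dvd n"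
      and "x \<in> disk absp a (absp a / real q)" "y \<in> disk absp a (absp a / real q)"
    then show "absp (\<alpha> * x ^ n - \<alpha> * y ^ n) = (absp \<alpha> * absp a ^ (n - 1)) * absp (x - y)"
      using char_p by (simp add: not_dvd_imp_multiplicity_0)
  qed (fact char_p)
qed

end
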